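(* Let $X$ be a Banach space and let $\alpha$ be a left tensorial norm on $\ell_\infty\otimes X$. Then there exist a Banach lattice $L$ and a linear isometry $J\colon X\to L$ such that for all $k\in\mathbb{N}$ and all $y_1,\dots,y_k\in X$, $$\Big\|\bigvee_{j=1}^k |Jy_j|\Big\|_L=\alpha\Big(\sum_{j=1}^k e_j\otimes y_j\Big).$$
   Context: All spaces are real. $(e_j)$ denotes the unit vector basis of $c_0\subseteq\ell_\infty$. A norm $\alpha$ on $Y\otimes X$ ($Y,X$ Banach spaces) is a crossnorm if $\alpha(y\otimes x)=\|y\|\|x\|$; it is called left tensorial if it is a crossnorm and for every bounded operator $T\colon Y\to Y$ the operator $T\otimes I_X$ is bounded on $(Y\otimes X,\alpha)$ with $\|T\otimes I_X\|\le\|T\|$, where $I_X$ is the identity of $X$. $\bigvee$ denotes the lattice supremum and $|\cdot|$ the lattice modulus. *)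

theory Defs
  imports "HOL-Analysis.Analysis"
begin

text \<open>l_infinity is modelled by the library type of bounded (continuous) functions
  on the discrete space nat, with the sup norm.\<close>

type_synonym linf = "nat \<Rightarrow>\<^sub>C real"

definition unit_vec :: "nat \<Rightarrow> linf"
  where "unit_vec j = Bcontfun (\<lambda>n. if n = j then 1 else 0)"

text \<open>The algebraic tensor product l_infinity (x) X is identified (via the canonical
  injective map) with the space of X-valued sequences of the form
  n |-> sum_i y_i(n) x_i; the elementary tensor y (x) x is n |-> y(n) x.\<close>

definition tensor_of :: "nat \<Rightarrow> (nat \<Rightarrow> linf) \<Rightarrow> (nat \<Rightarrow> 'x::real_vector) \<Rightarrow> (nat \<Rightarrow> 'x)"
  where "tensor_of m y x = (\<lambda>n. \<Sum>i<m. apply_bcontfun (y i) n *\<^sub>R x i)"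

definition linf_tensor :: "(nat \<Rightarrow> 'x::real_vector) set"
  where "linf_tensor = {f. \<exists>m y x. f = tensor_of m y x}"

definition elem_tensor :: "linf \<Rightarrow> 'x::real_vector \<Rightarrow> (nat \<Rightarrow> 'x)"
  where "elem_tensor y x = (\<lambda>n. apply_bcontfun y n *\<^sub>R x)"

definition is_norm_on :: "(nat \<Rightarrow> 'x::real_vector) set \<Rightarrow> ((nat \<Rightarrow> 'x) \<Rightarrow> real) \<Rightarrow> bool"
  where "is_norm_on V N \<longleftrightarrow>
     (\<forall>f\<in>V. N f = 0 \<longleftrightarrow> f = (\<lambda>n. 0)) \<and>
     (\<forall>f\<in>V. \<forall>c. N (\<lambda>n. c *\<^sub>R f n) = \<bar>c\<bar> * N f) \<and>
     (\<forall>f\<in>V. \<forall>g\<in>V. N (\<lambda>n. f n + g n) \<le> N f + N g)"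

definition crossnorm :: "((nat \<Rightarrow> 'x::real_normed_vector) \<Rightarrow> real) \<Rightarrow> bool"
  where "crossnorm \<alpha> \<longleftrightarrow> is_norm_on linf_tensor \<alpha> \<and>
     (\<forall>y x. \<alpha> (elem_tensor y x) = norm y * norm x)"

definition left_tensorial :: "((nat \<Rightarrow> 'x::real_normed_vector) \<Rightarrow> real) \<Rightarrow> bool"
  where "left_tensorial \<alpha> \<longleftrightarrow> crossnorm \<alpha> \<and>
     (\<forall>T :: linf \<Rightarrow> linf. bounded_linear T \<longrightarrow>
        (\<forall>m y x. \<alpha> (tensor_of m (\<lambda>i. T (y i)) x) \<le> onorm T * \<alpha> (tensor_of m y x)))"

record 'l blat =
  bl_carrier :: "'l set"
  bl_add :: "'l \<Rightarrow> 'l \<Rightarrow> 'l"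
  bl_scale :: "real \<Rightarrow> 'l \<Rightarrow> 'l"
  bl_zero :: "'l"
  bl_le :: "'l \<Rightarrow> 'l \<Rightarrow> bool"
  bl_norm :: "'l \<Rightarrow> real"

definition bl_sup :: "'l blat \<Rightarrow> 'l \<Rightarrow> 'l \<Rightarrow> 'l"
  where "bl_sup L x y = (THE z. z \<in> bl_carrier L \<and> bl_le L x z \<and> bl_le L y z \<and>
                          (\<forall>w\<in>bl_carrier L. bl_le L x w \<and> bl_le L y w \<longrightarrow> bl_le L z w))"

definition bl_abs :: "'l blat \<Rightarrow> 'l \<Rightarrow> 'l"
  where "bl_abs L x = bl_sup L x (bl_scale L (-1) x)"

text \<open>Finite supremum a_1 v ... v a_k (meaningful for k >= 1).\<close>
fun bl_Sup :: "'l blat \<Rightarrow> (nat \<Rightarrow> 'l) \<Rightarrow> nat \<Rightarrow> 'l" where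
  "bl_Sup L a 0 = bl_zero L"
| "bl_Sup L a (Suc 0) = a 1"
| "bl_Sup L a (Suc (Suc k)) = bl_sup L (bl_Sup L a (Suc k)) (a (Suc (Suc k)))"

definition banach_lattice :: "'l blat \<Rightarrow> bool" where
  "banach_lattice L \<longleftrightarrow>
   (let S = bl_carrier L; add = bl_add L; sc = bl_scale L; z = bl_zero L;
        le = bl_le L; nm = bl_norm L; diff = (\<lambda>x y. add x (sc (-1) y)) in
    \<comment> \<open>real vector space\<close>
    z \<in> S \<and> (\<forall>x\<in>S. \<forall>y\<in>S. add x y \<in> S) \<and> (\<forall>a. \<forall>x\<in>S. sc a x \<in> S) \<and>
    (\<forall>x\<in>S. \<forall>y\<in>S. \<forall>w\<in>S. add (add x y) w = add x (add y w)) \<and>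
    (\<forall>x\<in>S. \<forall>y\<in>S. add x y = add y x) \<and>
    (\<forall>x\<in>S. add x z = x) \<and>
    (\<forall>x\<in>S. \<exists>y\<in>S. add x y = z) \<and>
    (\<forall>a. \<forall>x\<in>S. \<forall>y\<in>S. sc a (add x y) = add (sc a x) (sc a y)) \<and>
    (\<forall>a b. \<forall>x\<in>S. sc (a + b) x = add (sc a x) (sc b x)) \<and>
    (\<forall>a b. \<forall>x\<in>S. sc a (sc b x) = sc (a * b) x) \<and>
    (\<forall>x\<in>S. sc 1 x = x) \<and>
    \<comment> \<open>ordered vector space\<close>
    (\<forall>x\<in>S. le x x) \<and>
    (\<forall>x\<in>S. \<forall>y\<in>S. le x y \<and> le y x \<longrightarrow> x = y) \<and>
    (\<forall>x\<in>S. \<forall>y\<in>S. \<forall>w\<in>S. le x y \<and> le y w \<longrightarrow> le x w) \<and>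
    (\<forall>x\<in>S. \<forall>y\<in>S. \<forall>w\<in>S. le x y \<longrightarrow> le (add x w) (add y w)) \<and>
    (\<forall>a. \<forall>x\<in>S. \<forall>y\<in>S. le x y \<and> 0 \<le> a \<longrightarrow> le (sc a x) (sc a y)) \<and>
    \<comment> \<open>vector lattice: every pair has a least upper bound\<close>
    (\<forall>x\<in>S. \<forall>y\<in>S. \<exists>u\<in>S. le x u \<and> le y u \<and> (\<forall>w\<in>S. le x w \<and> le y w \<longrightarrow> le u w)) \<and>
    \<comment> \<open>norm\<close>
    (\<forall>x\<in>S. nm x = 0 \<longleftrightarrow> x = z) \<and>
    (\<forall>a. \<forall>x\<in>S. nm (sc a x) = \<bar>a\<bar> * nm x) \<and>
    (\<forall>x\<in>S. \<forall>y\<in>S. nm (add x y) \<le> nm x + nm y) \<and>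
    \<comment> \<open>lattice norm\<close>
    (\<forall>x\<in>S. \<forall>y\<in>S. le (bl_abs L x) (bl_abs L y) \<longrightarrow> nm x \<le> nm y) \<and>
    \<comment> \<open>completeness\<close>
    (\<forall>s::nat \<Rightarrow> 'l. (\<forall>n. s n \<in> S) \<and>
        (\<forall>e>0. \<exists>N. \<forall>m\<ge>N. \<forall>n\<ge>N. nm (diff (s m) (s n)) < e) \<longrightarrow>
        (\<exists>l\<in>S. \<forall>e>0. \<exists>N. \<forall>n\<ge>N. nm (diff (s n) l) < e)))"

definition linear_isometry_into :: "'l blat \<Rightarrow> ('x::real_normed_vector \<Rightarrow> 'l) \<Rightarrow> bool" where
  "linear_isometry_into L J \<longleftrightarrow>
     (\<forall>x. J x \<in> bl_carrier L) \<and>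
     (\<forall>x y. J (x + y) = bl_add L (J x) (J y)) \<and>
     (\<forall>c x. J (c *\<^sub>R x) = bl_scale L c (J x)) \<and>
     (\<forall>x. bl_norm L (J x) = norm x)"

end

theory Submission
  imports Defs "HOL-Library.Function_Algebras"
begin

text \<open>
  The lattice is built by duality. Call a finite family of linear functionals \<open>l\<^sub>i\<close> on \<open>X\<close> with
  weights \<open>c\<^sub>i \<ge> 0\<close> admissible if \<open>\<Sum>\<^sub>i c\<^sub>i max\<^sub>j \<bar>l\<^sub>i z\<^sub>j\<bar> \<le> \<alpha> (\<Sum>\<^sub>j e\<^sub>j \<otimes> z\<^sub>j)\<close> for all finite
  sequences \<open>z\<close>, and call \<open>l\<close> an atom if \<open>l\<close> alone, with weight 1, is admissible. \<open>L\<close> consists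
  of the functions \<open>F\<close> on the atoms for which \<open>\<parallel>F\<parallel> = sup \<Sum>\<^sub>i c\<^sub>i \<bar>F l\<^sub>i\<bar>\<close>, the supremum over
  admissible families, is finite; with the pointwise order this is a Banach lattice, complete
  because \<open>\<bar>F l\<bar> \<le> \<parallel>F\<parallel>\<close> for every atom \<open>l\<close>. \<open>J x\<close> is evaluation at \<open>x\<close>.

  For \<open>G = \<Squnion>\<^sub>j \<bar>J y\<^sub>j\<bar>\<close> we have \<open>G l \<le> max\<^sub>j \<bar>l y\<^sub>j\<bar>\<close>, so \<open>\<parallel>G\<parallel> \<le> \<alpha> (\<Sum>\<^sub>j e\<^sub>j \<otimes> y\<^sub>j)\<close> by
  admissibility. Conversely, Hahn--Banach gives a linear \<open>W\<close> on \<open>X\<close>-valued sequences with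
  \<open>W z \<le> \<alpha> (\<Sum>\<^sub>j\<^sub>=\<^sub>1\<^sup>k e\<^sub>j \<otimes> z\<^sub>j)\<close> for all \<open>z\<close> and equality at \<open>y\<close>. Its coordinate functionals
  \<open>w\<^sub>j x = W (x e\<^sub>j)\<close> form an admissible family with unit weights: if the maximum in the
  \<open>j\<close>-th term is attained at \<open>\<sigma> j\<close> with sign \<open>\<epsilon>\<^sub>j\<close>, then left tensoriality, applied to the
  operator \<open>a \<mapsto> (\<epsilon>\<^sub>j a\<^sub>\<sigma>\<^sub>j)\<^sub>j\<close> of norm at most 1 on \<open>\<ell>\<^sub>\<infinity>\<close>, bounds the sum by
  \<open>\<alpha> (\<Sum>\<^sub>i e\<^sub>i \<otimes> z\<^sub>i)\<close>. Hence \<open>\<alpha> (\<Sum>\<^sub>j e\<^sub>j \<otimes> y\<^sub>j) = \<Sum>\<^sub>j w\<^sub>j y\<^sub>j \<le> \<Sum>\<^sub>j G w\<^sub>j \<le> \<parallel>G\<parallel>\<close>. For \<open>k = 1\<close>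
  this and the crossnorm property make \<open>J\<close> an isometry.
\<close>

section \<open>Hahn--Banach for sublinear functionals\<close>

definition sublinear :: "('v::real_vector \<Rightarrow> real) \<Rightarrow> bool" where
  "sublinear p \<longleftrightarrow> (\<forall>x y. p (x + y) \<le> p x + p y) \<and> (\<forall>c x. 0 < c \<longrightarrow> p (c *\<^sub>R x) = c * p x)"

lemma sublinearD:
  assumes "sublinear p"
  shows sublinear_add: "p (x + y) \<le> p x + p y"
    and sublinear_scale: "0 < c \<Longrightarrow> p (c *\<^sub>R x) = c * p x"
  using assms unfolding sublinear_def by auto

lemma sublinear_zero:
  assumes "sublinear p"
  shows "p 0 = 0"
  using sublinear_scale[OF assms, of 2 0] by simp

definition dominated_graph :: "('v::real_vector \<Rightarrow> real) \<Rightarrow> ('v \<times> real) set \<Rightarrow> bool" where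
  "dominated_graph p G \<longleftrightarrow>
    (0, 0) \<in> G \<and>
    (\<forall>x a b. (x, a) \<in> G \<longrightarrow> (x, b) \<in> G \<longrightarrow> a = b) \<and>
    (\<forall>x a y b. (x, a) \<in> G \<longrightarrow> (y, b) \<in> G \<longrightarrow> (x + y, a + b) \<in> G) \<and>
    (\<forall>x a c. (x, a) \<in> G \<longrightarrow> (c *\<^sub>R x, c * a) \<in> G) \<and>
    (\<forall>x a. (x, a) \<in> G \<longrightarrow> a \<le> p x)"

lemma dominated_graphD:
  assumes "dominated_graph p G"
  shows dominated_graph_zero: "(0, 0) \<in> G"
    and dominated_graph_unique: "(x, a) \<in> G \<Longrightarrow> (x, b) \<in> G \<Longrightarrow> a = b"
    and dominated_graph_add: "(x, a) \<in> G \<Longrightarrow> (y, b) \<in> G \<Longrightarrow> (x + y, a + b) \<in> G"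
    and dominated_graph_scale: "(x, a) \<in> G \<Longrightarrow> (c *\<^sub>R x, c * a) \<in> G"
    and dominated_graph_le: "(x, a) \<in> G \<Longrightarrow> a \<le> p x"
  using assms unfolding dominated_graph_def by blast+

lemma dominated_graph_Union:
  assumes "C \<noteq> {}" and dom: "\<And>G. G \<in> C \<Longrightarrow> dominated_graph p G"
    and chain: "\<And>G H. G \<in> C \<Longrightarrow> H \<in> C \<Longrightarrow> G \<subseteq> H \<or> H \<subseteq> G"
  shows "dominated_graph p (\<Union>C)"
proof -
  have common: "\<exists>G\<in>C. u \<in> G \<and> v \<in> G" if "u \<in> \<Union>C" "v \<in> \<Union>C" for u v
    using that chain by blast
  obtain G where "G \<in> C" using \<open>C \<noteq> {}\<close> by blast
  then have "(0, 0) \<in> \<Union>C" using dom dominated_graph_zero by blast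
  moreover have "a = b" if "(x, a) \<in> \<Union>C" "(x, b) \<in> \<Union>C" for x a b
    using common[OF that] dom dominated_graph_unique by metis
  moreover have "(x + y, a + b) \<in> \<Union>C" if "(x, a) \<in> \<Union>C" "(y, b) \<in> \<Union>C" for x a y b
    using common[OF that] dom dominated_graph_add by blast
  moreover have "(c *\<^sub>R x, c * a) \<in> \<Union>C" if "(x, a) \<in> \<Union>C" for x a c
    using that dom dominated_graph_scale by blast
  moreover have "a \<le> p x" if "(x, a) \<in> \<Union>C" for x a
    using that dom dominated_graph_le by blast
  ultimately show ?thesis unfolding dominated_graph_def by blast
qed

definition graph_adjoin :: "('v::real_vector \<times> real) set \<Rightarrow> 'v \<Rightarrow> real \<Rightarrow> ('v \<times> real) set" where
  "graph_adjoin G x0 c = {(h + t *\<^sub>R x0, a + t * c) | h a t. (h, a) \<in> G}"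

lemma subset_graph_adjoin: "G \<subseteq> graph_adjoin G x0 c"
  unfolding graph_adjoin_def by force

lemma graph_adjoin_point: "(0, 0) \<in> G \<Longrightarrow> (x0, c) \<in> graph_adjoin G x0 c"
  unfolding graph_adjoin_def by force

lemma graph_adjoin_coordinates_unique:
  assumes G: "dominated_graph p G" and new: "\<nexists>a. (x0, a) \<in> G"
    and ha: "(h, a) \<in> G" and ha': "(h', a') \<in> G" and eq: "h + t *\<^sub>R x0 = h' + s *\<^sub>R x0"
  shows "t = s \<and> h = h'"
proof (cases "t = s")
  case True
  then show ?thesis using eq by simp
next
  case False
  have "(h' + (-1) *\<^sub>R h, a' + (-1) * a) \<in> G"
    using dominated_graph_add[OF G ha' dominated_graph_scale[OF G ha]] .
  from dominated_graph_scale[OF G this, of "1 / (t - s)"]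
  have "((1 / (t - s)) *\<^sub>R (h' - h), (1 / (t - s)) * (a' - a)) \<in> G" by simp
  moreover have "(t - s) *\<^sub>R x0 = h' - h"
    using eq by (simp add: algebra_simps)
  then have "(1 / (t - s)) *\<^sub>R (h' - h) = x0"
    using False by (simp add: vector_add_divide_simps)
  ultimately show ?thesis using new by auto
qed

lemma graph_adjoin_dominated:
  assumes p: "sublinear p" and G: "dominated_graph p G"
    and lower: "\<And>h a. (h, a) \<in> G \<Longrightarrow> a - p (h - x0) \<le> c"
    and upper: "\<And>h a. (h, a) \<in> G \<Longrightarrow> c \<le> p (h + x0) - a"
    and ha: "(h, a) \<in> G"
  shows "a + t * c \<le> p (h + t *\<^sub>R x0)"
proof -
  consider "t = 0" | "t > 0" | "t < 0" by linarith
  then show ?thesis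
  proof cases
    case 1
    then show ?thesis using dominated_graph_le[OF G ha] by simp
  next
    case 2
    have "c \<le> p ((1 / t) *\<^sub>R h + x0) - (1 / t) * a"
      using upper[OF dominated_graph_scale[OF G ha]] .
    then have "t * c \<le> t * p ((1 / t) *\<^sub>R h + x0) - a"
      using 2 by (simp add: field_simps)
    also have "t * p ((1 / t) *\<^sub>R h + x0) = p (h + t *\<^sub>R x0)"
      using sublinear_scale[OF p 2, of "(1 / t) *\<^sub>R h + x0"] 2 by (simp add: algebra_simps)
    finally show ?thesis by simp
  next
    case 3
    have "(-1 / t) * a - p ((-1 / t) *\<^sub>R h - x0) \<le> c"
      using lower[OF dominated_graph_scale[OF G ha]] .
    then have "a + t * c \<le> (- t) * p ((-1 / t) *\<^sub>R h - x0)"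
      using 3 by (simp add: field_simps)
    also have "(- t) * p ((-1 / t) *\<^sub>R h - x0) = p (h + t *\<^sub>R x0)"
      using sublinear_scale[of p "- t" "(-1 / t) *\<^sub>R h - x0"] p 3 by (simp add: algebra_simps)
    finally show ?thesis by simp
  qed
qed

lemma dominated_graph_adjoin:
  assumes p: "sublinear p" and G: "dominated_graph p G" and new: "\<nexists>a. (x0, a) \<in> G"
    and lower: "\<And>h a. (h, a) \<in> G \<Longrightarrow> a - p (h - x0) \<le> c"
    and upper: "\<And>h a. (h, a) \<in> G \<Longrightarrow> c \<le> p (h + x0) - a"
  shows "dominated_graph p (graph_adjoin G x0 c)"
proof -
  let ?G' = "graph_adjoin G x0 c"
  have unique: "a + t * c = a' + s * c"
    if "(h, a) \<in> G" "(h', a') \<in> G" "h + t *\<^sub>R x0 = h' + s *\<^sub>R x0" for h a h' a' t s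
    using graph_adjoin_coordinates_unique[OF G new that] dominated_graph_unique[OF G] that by blast
  have "(0, 0) \<in> ?G'"
    using subset_graph_adjoin dominated_graph_zero[OF G] by blast
  moreover have "b = b'" if "(x, b) \<in> ?G'" "(x, b') \<in> ?G'" for x b b'
    using that unique unfolding graph_adjoin_def by auto
  moreover have "(x + y, b + b') \<in> ?G'" if xy: "(x, b) \<in> ?G'" "(y, b') \<in> ?G'" for x b y b'
  proof -
    obtain h a t h' a' s where "(h, a) \<in> G" "(h', a') \<in> G"
      and "x = h + t *\<^sub>R x0" "b = a + t * c" "y = h' + s *\<^sub>R x0" "b' = a' + s * c"
      using xy unfolding graph_adjoin_def by blast
    moreover have "(h + h' + (t + s) *\<^sub>R x0, a + a' + (t + s) * c) \<in> ?G'"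
      using dominated_graph_add[OF G calculation(1,2)] unfolding graph_adjoin_def by blast
    ultimately show ?thesis by (simp add: algebra_simps)
  qed
  moreover have "(r *\<^sub>R x, r * b) \<in> ?G'" if x: "(x, b) \<in> ?G'" for x b r
  proof -
    obtain h a t where "(h, a) \<in> G" "x = h + t *\<^sub>R x0" "b = a + t * c"
      using x unfolding graph_adjoin_def by blast
    moreover have "(r *\<^sub>R h + (r * t) *\<^sub>R x0, r * a + (r * t) * c) \<in> ?G'"
      using dominated_graph_scale[OF G calculation(1)] unfolding graph_adjoin_def by blast
    ultimately show ?thesis by (simp add: algebra_simps)
  qed
  moreover have "b \<le> p x" if "(x, b) \<in> ?G'" for x b
    using that graph_adjoin_dominated[OF p G lower upper] unfolding graph_adjoin_def by auto
  ultimately show ?thesis unfolding dominated_graph_def by blast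
qed

lemma dominated_graph_extend:
  assumes p: "sublinear p" and G: "dominated_graph p G"
  obtains G' a where "dominated_graph p G'" "G \<subseteq> G'" "(x0, a) \<in> G'"
proof (cases "\<exists>a. (x0, a) \<in> G")
  case True
  then show ?thesis using that G by blast
next
  case False
  define c where "c = Sup {a - p (h - x0) | h a. (h, a) \<in> G}"
  have gap: "a - p (h - x0) \<le> p (h' + x0) - a'" if "(h, a) \<in> G" "(h', a') \<in> G" for h a h' a'
  proof -
    have "a + a' \<le> p ((h - x0) + (h' + x0))"
      using dominated_graph_le[OF G dominated_graph_add[OF G that]] by simp
    also have "\<dots> \<le> p (h - x0) + p (h' + x0)" by (rule sublinear_add[OF p])
    finally show ?thesis by simp
  qed
  have "a - p (h - x0) \<le> c" if "(h, a) \<in> G" for h a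
    unfolding c_def using that gap[OF _ dominated_graph_zero[OF G]]
    by (intro cSup_upper bdd_aboveI[of _ "p (0 + x0) - 0"]) auto
  moreover have "c \<le> p (h + x0) - a" if "(h, a) \<in> G" for h a
    unfolding c_def using that gap dominated_graph_zero[OF G] by (intro cSup_least) auto
  ultimately have "dominated_graph p (graph_adjoin G x0 c)"
    by (intro dominated_graph_adjoin[OF p G False])
  then show ?thesis
    using that subset_graph_adjoin graph_adjoin_point[OF dominated_graph_zero[OF G]] by blast
qed

lemma exists_dominated_graph_through:
  assumes p: "sublinear p"
  obtains G where "dominated_graph p G" "(y0, p y0) \<in> G"
proof -
  have zero: "dominated_graph p {(0, 0)}"
    unfolding dominated_graph_def using sublinear_zero[OF p] by auto
  show ?thesis
  proof (cases "y0 = 0")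
    case True
    then show ?thesis using that zero sublinear_zero[OF p] by blast
  next
    case False
    have "0 \<le> p y0 + p (- y0)" using sublinear_add[OF p, of y0 "- y0"] sublinear_zero[OF p] by simp
    then have "dominated_graph p (graph_adjoin {(0, 0)} y0 (p y0))"
      using False by (intro dominated_graph_adjoin[OF p zero]) auto
    then show ?thesis using that graph_adjoin_point[of "{(0, 0)}"] by blast
  qed
qed

lemma exists_total_dominated_graph:
  assumes p: "sublinear p"
  obtains M where "dominated_graph p M" "(y0, p y0) \<in> M" "\<And>x. \<exists>a. (x, a) \<in> M"
proof -
  define A where "A = {G. dominated_graph p G \<and> (y0, p y0) \<in> G}"
  have "\<exists>U\<in>A. \<forall>X\<in>C. X \<subseteq> U" if C: "C \<in> chains A" for C
  proof (cases "C = {}")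
    case True
    obtain G where "dominated_graph p G" "(y0, p y0) \<in> G"
      using exists_dominated_graph_through[OF p] .
    then show ?thesis using True unfolding A_def by blast
  next
    case False
    have CA: "C \<subseteq> A" and chain: "chain\<^sub>\<subseteq> C" using C unfolding chains_def by blast+
    have "dominated_graph p (\<Union>C)"
    proof (rule dominated_graph_Union[OF False])
      show "\<And>G. G \<in> C \<Longrightarrow> dominated_graph p G" using CA unfolding A_def by blast
      show "\<And>G H. G \<in> C \<Longrightarrow> H \<in> C \<Longrightarrow> G \<subseteq> H \<or> H \<subseteq> G"
        using chain unfolding chain_subset_def by blast
    qed
    moreover have "(y0, p y0) \<in> \<Union>C" using CA False unfolding A_def by blast
    ultimately show ?thesis unfolding A_def by blast
  qed
  then obtain M where M: "M \<in> A" and maximal: "\<forall>X\<in>A. M \<subseteq> X \<longrightarrow> X = M"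
    using Zorn_Lemma2[of A] by blast
  have M_dom: "dominated_graph p M" and y0: "(y0, p y0) \<in> M" using M unfolding A_def by blast+
  have "\<exists>a. (x, a) \<in> M" for x
  proof -
    obtain M' a where "dominated_graph p M'" "M \<subseteq> M'" "(x, a) \<in> M'"
      using dominated_graph_extend[OF p M_dom] .
    moreover from this have "M' = M" using maximal y0 unfolding A_def by blast
    ultimately show ?thesis by blast
  qed
  then show ?thesis using that M_dom y0 by blast
qed

theorem hahn_banach_sublinear:
  assumes p: "sublinear p"
  obtains f where "linear f" "\<And>x. f x \<le> p x" "f y0 = p y0"
proof -
  obtain M where M: "dominated_graph p M" and y0: "(y0, p y0) \<in> M"
    and total: "\<And>x. \<exists>a. (x, a) \<in> M"
    using exists_total_dominated_graph[OF p] by blast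
  define f where "f x = (THE a. (x, a) \<in> M)" for x
  have f_eq: "f x = a" if "(x, a) \<in> M" for x a
    unfolding f_def using that dominated_graph_unique[OF M] by blast
  have graph: "(x, f x) \<in> M" for x
    using total f_eq by metis
  have "linear f"
    by (rule linearI) (simp_all add: f_eq dominated_graph_add[OF M graph graph]
        dominated_graph_scale[OF M graph])
  moreover have "f x \<le> p x" for x using dominated_graph_le[OF M graph] .
  ultimately show ?thesis using that f_eq[OF y0] by blast
qed

section \<open>Banach lattices normed by weighted families\<close>

text \<open>\<open>(n, c, l)\<close> stands for the points \<open>l 0, \<dots>, l (n - 1)\<close> with weights \<open>c 0, \<dots>, c (n - 1)\<close>.\<close>

type_synonym 'i weighted_family = "nat \<times> (nat \<Rightarrow> real) \<times> (nat \<Rightarrow> 'i)"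

definition family_sum :: "('i \<Rightarrow> real) \<Rightarrow> 'i weighted_family \<Rightarrow> real" where
  "family_sum F a = (case a of (n, c, l) \<Rightarrow> \<Sum>i<n. c i * \<bar>F (l i)\<bar>)"

lemma family_sum_scale: "family_sum (\<lambda>g. r * F g) a = \<bar>r\<bar> * family_sum F a"
  unfolding family_sum_def by (cases a) (simp add: sum_distrib_left abs_mult algebra_simps)

lemma family_sum_abs: "family_sum (\<lambda>g. \<bar>F g\<bar>) a = family_sum F a"
  unfolding family_sum_def by (cases a) simp

locale weighted_families =
  fixes A :: "'i weighted_family set"
  assumes families_nonempty: "A \<noteq> {}"
    and family_weights_nonneg: "(n, c, l) \<in> A \<Longrightarrow> i < n \<Longrightarrow> 0 \<le> c i"
begin

definition atoms :: "'i set" where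
  "atoms = {g. (1, \<lambda>_. 1, \<lambda>_. g) \<in> A}"

definition family_norm :: "('i \<Rightarrow> real) \<Rightarrow> real" where
  "family_norm F = Sup (family_sum F ` A)"

definition family_space :: "('i \<Rightarrow> real) set" where
  "family_space = {F. (\<forall>g. g \<notin> atoms \<longrightarrow> F g = 0) \<and> bdd_above (family_sum F ` A)}"

definition family_lattice :: "('i \<Rightarrow> real) blat" where
  "family_lattice =
    \<lparr>bl_carrier = family_space, bl_add = (\<lambda>F G g. F g + G g), bl_scale = (\<lambda>r F g. r * F g),
     bl_zero = (\<lambda>g. 0), bl_le = (\<lambda>F G. \<forall>g. F g \<le> G g), bl_norm = family_norm\<rparr>"

lemma family_lattice_simps [simp]:
  "bl_carrier family_lattice = family_space"
  "bl_add family_lattice = (\<lambda>F G g. F g + G g)"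
  "bl_scale family_lattice = (\<lambda>r F g. r * F g)"
  "bl_zero family_lattice = (\<lambda>g. 0)"
  "bl_le family_lattice = (\<lambda>F G. \<forall>g. F g \<le> G g)"
  "bl_norm family_lattice = family_norm"
  by (simp_all add: family_lattice_def)

lemma family_sum_nonneg: "a \<in> A \<Longrightarrow> 0 \<le> family_sum F a"
  unfolding family_sum_def by (cases a) (auto intro!: sum_nonneg dest: family_weights_nonneg)

lemma family_sum_le_sum:
  assumes "a \<in> A" and "\<And>g. \<bar>H g\<bar> \<le> \<bar>F g\<bar> + \<bar>G g\<bar>"
  shows "family_sum H a \<le> family_sum F a + family_sum G a"
proof -
  obtain n c l where a: "a = (n, c, l)" by (cases a)
  have "(\<Sum>i<n. c i * \<bar>H (l i)\<bar>) \<le> (\<Sum>i<n. c i * \<bar>F (l i)\<bar> + c i * \<bar>G (l i)\<bar>)"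
    using family_weights_nonneg assms a
    by (intro sum_mono) (simp add: distrib_left[symmetric] mult_left_mono)
  then show ?thesis unfolding family_sum_def a by (simp add: sum.distrib)
qed

lemma family_sum_mono:
  assumes "a \<in> A" and "\<And>g. \<bar>H g\<bar> \<le> \<bar>F g\<bar>"
  shows "family_sum H a \<le> family_sum F a"
  using family_sum_le_sum[of a H F "\<lambda>_. 0"] assms by (simp add: family_sum_def split: prod.splits)

lemma family_sum_le_norm: "F \<in> family_space \<Longrightarrow> a \<in> A \<Longrightarrow> family_sum F a \<le> family_norm F"
  unfolding family_norm_def family_space_def by (auto intro!: cSup_upper)

lemma family_norm_le: "(\<And>a. a \<in> A \<Longrightarrow> family_sum F a \<le> B) \<Longrightarrow> family_norm F \<le> B"
  unfolding family_norm_def using families_nonempty by (intro cSup_least) auto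

lemma family_spaceI:
  "(\<And>g. g \<notin> atoms \<Longrightarrow> F g = 0) \<Longrightarrow> (\<And>a. a \<in> A \<Longrightarrow> family_sum F a \<le> B) \<Longrightarrow> F \<in> family_space"
  unfolding family_space_def bdd_above_def by blast

lemma family_space_vanishes: "F \<in> family_space \<Longrightarrow> g \<notin> atoms \<Longrightarrow> F g = 0"
  unfolding family_space_def by blast

lemma family_norm_nonneg: "F \<in> family_space \<Longrightarrow> 0 \<le> family_norm F"
  using families_nonempty family_sum_le_norm family_sum_nonneg by (meson ex_in_conv order_trans)

lemma abs_le_family_norm: "F \<in> family_space \<Longrightarrow> g \<in> atoms \<Longrightarrow> \<bar>F g\<bar> \<le> family_norm F"
  using family_sum_le_norm[of F "(1, \<lambda>_. 1, \<lambda>_. g)"] unfolding atoms_def family_sum_def by simp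

lemma family_space_dominated:
  assumes "F \<in> family_space" "G \<in> family_space" and "\<And>g. \<bar>H g\<bar> \<le> \<bar>F g\<bar> + \<bar>G g\<bar>"
  shows "H \<in> family_space" "family_norm H \<le> family_norm F + family_norm G"
proof -
  have bound: "family_sum H a \<le> family_norm F + family_norm G" if "a \<in> A" for a
    using family_sum_le_sum[of a H F G, OF that assms(3)] family_sum_le_norm[OF assms(1) that]
      family_sum_le_norm[OF assms(2) that] by linarith
  show "H \<in> family_space"
  proof (rule family_spaceI[OF _ bound])
    show "H g = 0" if "g \<notin> atoms" for g
      using assms(3)[of g] family_space_vanishes[OF assms(1) that] family_space_vanishes[OF assms(2) that]
      by simp
  qed
  show "family_norm H \<le> family_norm F + family_norm G" by (rule family_norm_le[OF bound])
qed

lemma zero_in_family_space: "(\<lambda>g. 0) \<in> family_space"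
  by (rule family_spaceI[of _ 0]) (auto simp: family_sum_def)

lemma add_in_family_space: "F \<in> family_space \<Longrightarrow> G \<in> family_space \<Longrightarrow> (\<lambda>g. F g + G g) \<in> family_space"
  using family_space_dominated(1)[of F G "\<lambda>g. F g + G g"] by (simp add: abs_triangle_ineq)

lemma scale_in_family_space:
  assumes "F \<in> family_space"
  shows "(\<lambda>g. r * F g) \<in> family_space"
proof (rule family_spaceI)
  show "family_sum (\<lambda>g. r * F g) a \<le> \<bar>r\<bar> * family_norm F" if "a \<in> A" for a
    using family_sum_le_norm[OF assms that] by (simp add: family_sum_scale mult_left_mono)
qed (use family_space_vanishes[OF assms] in simp)

lemma max_in_family_space:
  "F \<in> family_space \<Longrightarrow> G \<in> family_space \<Longrightarrow> (\<lambda>g. max (F g) (G g)) \<in> family_space"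
  using family_space_dominated(1)[of F G "\<lambda>g. max (F g) (G g)"] by (simp add: max_def)

lemma abs_in_family_space: "F \<in> family_space \<Longrightarrow> (\<lambda>g. \<bar>F g\<bar>) \<in> family_space"
  using family_space_dominated(1)[of F "\<lambda>_. 0" "\<lambda>g. \<bar>F g\<bar>"] zero_in_family_space by simp

lemma diff_in_family_space: "F \<in> family_space \<Longrightarrow> G \<in> family_space \<Longrightarrow> (\<lambda>g. F g - G g) \<in> family_space"
  using add_in_family_space[OF _ scale_in_family_space[of G "-1"], of F] by simp

lemma family_norm_add:
  "F \<in> family_space \<Longrightarrow> G \<in> family_space \<Longrightarrow> family_norm (\<lambda>g. F g + G g) \<le> family_norm F + family_norm G"
  using family_space_dominated(2)[of F G "\<lambda>g. F g + G g"] by (simp add: abs_triangle_ineq)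

lemma family_norm_mono:
  "F \<in> family_space \<Longrightarrow> (\<And>g. \<bar>H g\<bar> \<le> \<bar>F g\<bar>) \<Longrightarrow> family_norm H \<le> family_norm F"
  by (rule family_norm_le) (meson family_sum_mono family_sum_le_norm order_trans)

lemma family_norm_abs: "family_norm (\<lambda>g. \<bar>F g\<bar>) = family_norm F"
  unfolding family_norm_def family_sum_abs ..

lemma family_norm_scale:
  assumes F: "F \<in> family_space"
  shows "family_norm (\<lambda>g. r * F g) = \<bar>r\<bar> * family_norm F"
proof (rule antisym)
  show "family_norm (\<lambda>g. r * F g) \<le> \<bar>r\<bar> * family_norm F"
    by (rule family_norm_le) (simp add: family_sum_scale mult_left_mono family_sum_le_norm[OF F])
  show "\<bar>r\<bar> * family_norm F \<le> family_norm (\<lambda>g. r * F g)"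
  proof (cases "r = 0")
    case True
    then show ?thesis using family_norm_nonneg[OF scale_in_family_space[OF F, of 0]] by simp
  next
    case False
    have "family_sum F a \<le> family_norm (\<lambda>g. r * F g) / \<bar>r\<bar>" if "a \<in> A" for a
      using family_sum_le_norm[OF scale_in_family_space[OF F] that, of r] False
      by (simp add: family_sum_scale field_simps)
    then have "family_norm F \<le> family_norm (\<lambda>g. r * F g) / \<bar>r\<bar>" by (rule family_norm_le)
    then show ?thesis using False by (simp add: field_simps)
  qed
qed

lemma family_norm_eq_0_iff: "F \<in> family_space \<Longrightarrow> family_norm F = 0 \<longleftrightarrow> F = (\<lambda>g. 0)"
proof
  assume F: "F \<in> family_space" and "family_norm F = 0"
  then show "F = (\<lambda>g. 0)"
    using abs_le_family_norm[OF F] family_space_vanishes[OF F] by (metis abs_le_zero_iff)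
next
  assume "F = (\<lambda>g. 0)"
  then show "family_norm F = 0"
    using family_norm_scale[OF zero_in_family_space, of 0] by simp
qed

lemma bl_sup_family_lattice:
  assumes F: "F \<in> family_space" and G: "G \<in> family_space"
  shows "bl_sup family_lattice F G = (\<lambda>g. max (F g) (G g))"
  unfolding bl_sup_def
proof (rule the_equality)
  show "(\<lambda>g. max (F g) (G g)) \<in> bl_carrier family_lattice \<and>
      bl_le family_lattice F (\<lambda>g. max (F g) (G g)) \<and> bl_le family_lattice G (\<lambda>g. max (F g) (G g)) \<and>
      (\<forall>w\<in>bl_carrier family_lattice. bl_le family_lattice F w \<and> bl_le family_lattice G w \<longrightarrow>
        bl_le family_lattice (\<lambda>g. max (F g) (G g)) w)"
    using max_in_family_space[OF F G] by simp
  fix z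
  assume "z \<in> bl_carrier family_lattice \<and> bl_le family_lattice F z \<and> bl_le family_lattice G z \<and>
      (\<forall>w\<in>bl_carrier family_lattice. bl_le family_lattice F w \<and> bl_le family_lattice G w \<longrightarrow>
        bl_le family_lattice z w)"
  then have "z g \<le> max (F g) (G g)" "F g \<le> z g" "G g \<le> z g" for g
    using max_in_family_space[OF F G] by auto
  then show "z = (\<lambda>g. max (F g) (G g))" by (intro ext) (meson antisym max.boundedI)
qed

lemma bl_abs_family_lattice:
  assumes F: "F \<in> family_space"
  shows "bl_abs family_lattice F = (\<lambda>g. \<bar>F g\<bar>)"
proof -
  have neg: "(\<lambda>g. - F g) \<in> family_space" using scale_in_family_space[OF F, of "-1"] by simp
  have "bl_abs family_lattice F = bl_sup family_lattice F (\<lambda>g. - F g)"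
    by (simp add: bl_abs_def)
  also have "\<dots> = (\<lambda>g. \<bar>F g\<bar>)"
    by (auto simp: bl_sup_family_lattice[OF F neg] max_def fun_eq_iff)
  finally show ?thesis .
qed

lemma bl_Sup_family_lattice:
  fixes a :: "nat \<Rightarrow> 'i \<Rightarrow> real"
  assumes a: "\<And>j. a j \<in> family_space" and "1 \<le> k"
  shows "bl_Sup family_lattice a k = (\<lambda>g. Max ((\<lambda>j. a j g) ` {1..k}))
    \<and> bl_Sup family_lattice a k \<in> family_space"
  using \<open>1 \<le> k\<close>
proof (induction k rule: nat_induct_at_least)
  case base
  then show ?case using a[of 1] by simp
next
  case (Suc n)
  then obtain n' where n: "n = Suc n'" by (cases n) auto
  let ?S = "bl_Sup family_lattice a n"
  have S: "?S \<in> family_space" using Suc by blast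
  have step: "bl_Sup family_lattice a (Suc n) = (\<lambda>g. max (?S g) (a (Suc n) g))"
    using bl_sup_family_lattice[OF S a] n by simp
  have "{1..Suc n} = insert (Suc n) {1..n}" by auto
  then show ?case
    unfolding step using Suc n max_in_family_space[OF S a] by (auto simp: max.commute)
qed

lemma family_space_Cauchy_pointwise:
  fixes s :: "nat \<Rightarrow> 'i \<Rightarrow> real"
  assumes s: "\<And>n. s n \<in> family_space"
    and Cauchy: "\<forall>e>0. \<exists>N. \<forall>m\<ge>N. \<forall>n\<ge>N. family_norm (\<lambda>g. s m g - s n g) < e"
  shows "Cauchy (\<lambda>n. s n g)"
proof (cases "g \<in> atoms")
  case True
  have bound: "\<bar>s m g - s n g\<bar> \<le> family_norm (\<lambda>g. s m g - s n g)" for m n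
    using abs_le_family_norm[OF diff_in_family_space[OF s s] True] by simp
  show ?thesis
    unfolding Cauchy_def dist_real_def
  proof (intro allI impI)
    fix e :: real
    assume "0 < e"
    then obtain N where "\<forall>m\<ge>N. \<forall>n\<ge>N. family_norm (\<lambda>g. s m g - s n g) < e"
      using Cauchy by blast
    then show "\<exists>M. \<forall>m\<ge>M. \<forall>n\<ge>M. \<bar>s m g - s n g\<bar> < e"
      using bound by (meson le_less_trans)
  qed
next
  case False
  then show ?thesis using family_space_vanishes[OF s] by (simp add: Cauchy_convergent_iff convergent_const)
qed

lemma family_sum_le_of_tendsto:
  fixes s :: "nat \<Rightarrow> 'i \<Rightarrow> real"
  assumes lim: "\<And>g. (\<lambda>m. s m g) \<longlonglongrightarrow> l g" and s: "\<And>m. s m \<in> family_space" and a: "a \<in> A"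
    and bound: "\<And>m. N \<le> m \<Longrightarrow> family_norm (s m) \<le> e"
  shows "family_sum l a \<le> e"
proof (rule LIMSEQ_le_const2)
  show "(\<lambda>m. family_sum (s m) a) \<longlonglongrightarrow> family_sum l a"
    unfolding family_sum_def by (cases a) (simp, intro tendsto_intros lim)
  show "\<exists>N. \<forall>m\<ge>N. family_sum (s m) a \<le> e"
    using bound family_sum_le_norm[OF s a] order_trans by blast
qed

lemma family_space_complete:
  fixes s :: "nat \<Rightarrow> 'i \<Rightarrow> real"
  assumes s: "\<And>n. s n \<in> family_space"
    and Cauchy: "\<forall>e>0. \<exists>N. \<forall>m\<ge>N. \<forall>n\<ge>N. family_norm (\<lambda>g. s m g - s n g) < e"
  shows "\<exists>l\<in>family_space. \<forall>e>0. \<exists>N. \<forall>n\<ge>N. family_norm (\<lambda>g. s n g - l g) < e"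
proof -
  define l where "l g = lim (\<lambda>n. s n g)" for g
  have lim: "(\<lambda>n. s n g) \<longlonglongrightarrow> l g" for g
    unfolding l_def using family_space_Cauchy_pointwise[OF s Cauchy]
    by (simp add: Cauchy_convergent_iff convergent_LIMSEQ_iff)
  have tail: "family_sum (\<lambda>g. l g - s n g) a \<le> e"
    if a: "a \<in> A" and N: "\<forall>m\<ge>N. family_norm (\<lambda>g. s m g - s n g) < e" for a n e N
    using a N diff_in_family_space[OF s s]
    by (intro family_sum_le_of_tendsto[where s = "\<lambda>m g. s m g - s n g" and N = N])
      (auto intro: tendsto_intros lim less_imp_le)
  obtain N1 where N1: "\<forall>m\<ge>N1. \<forall>n\<ge>N1. family_norm (\<lambda>g. s m g - s n g) < 1"
    using Cauchy by force
  have "l \<in> family_space"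
  proof (rule family_spaceI)
    show "l g = 0" if "g \<notin> atoms" for g
      using lim[of g] family_space_vanishes[OF s that] LIMSEQ_unique[OF _ tendsto_const] by simp
    show "family_sum l a \<le> family_norm (s N1) + 1" if a: "a \<in> A" for a
    proof -
      have "family_sum l a \<le> family_sum (s N1) a + family_sum (\<lambda>g. l g - s N1 g) a"
        by (rule family_sum_le_sum[OF a]) linarith
      then show ?thesis
        using family_sum_le_norm[OF s a, of N1] tail[OF a, where n = N1 and e = 1 and N = N1] N1 by force
    qed
  qed
  moreover have "\<exists>N. \<forall>n\<ge>N. family_norm (\<lambda>g. s n g - l g) < e" if e: "e > 0" for e
  proof -
    obtain N where N: "\<forall>m\<ge>N. \<forall>n\<ge>N. family_norm (\<lambda>g. s m g - s n g) < e / 2"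
      using Cauchy e by (metis half_gt_zero)
    have "family_norm (\<lambda>g. s n g - l g) \<le> e / 2" if "N \<le> n" for n
    proof (rule family_norm_le)
      fix a assume a: "a \<in> A"
      have "family_sum (\<lambda>g. s n g - l g) a \<le> family_sum (\<lambda>g. l g - s n g) a"
        by (rule family_sum_mono[OF a]) linarith
      also have "\<dots> \<le> e / 2" using tail[OF a, where n = n and e = "e / 2" and N = N] N that by force
      finally show "family_sum (\<lambda>g. s n g - l g) a \<le> e / 2" .
    qed
    moreover have "e / 2 < e" using e by simp
    ultimately show ?thesis by (meson le_less_trans)
  qed
  ultimately show ?thesis by blast
qed

theorem banach_lattice_family_lattice: "banach_lattice family_lattice"
  unfolding banach_lattice_def Let_def family_lattice_simps
proof (intro conjI ballI allI impI)
  show "(\<lambda>g. 0) \<in> family_space" by (rule zero_in_family_space)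
next
  fix F G assume "F \<in> family_space" "G \<in> family_space"
  then show "(\<lambda>g. F g + G g) \<in> family_space" by (rule add_in_family_space)
next
  fix r F assume "F \<in> family_space"
  then show "(\<lambda>g. r * F g) \<in> family_space" by (rule scale_in_family_space)
next
  fix F assume "F \<in> family_space"
  then show "\<exists>G\<in>family_space. (\<lambda>g. F g + G g) = (\<lambda>g. 0)"
    by (intro bexI[of _ "\<lambda>g. (-1) * F g"] scale_in_family_space) auto
next
  fix F G assume "F \<in> family_space" "G \<in> family_space" "(\<forall>g. F g \<le> G g) \<and> (\<forall>g. G g \<le> F g)"
  then show "F = G" by (auto intro: antisym)
next
  fix F G assume "F \<in> family_space" "G \<in> family_space"
  then show "\<exists>U\<in>family_space. (\<forall>g. F g \<le> U g) \<and> (\<forall>g. G g \<le> U g) \<and>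
      (\<forall>W\<in>family_space. (\<forall>g. F g \<le> W g) \<and> (\<forall>g. G g \<le> W g) \<longrightarrow> (\<forall>g. U g \<le> W g))"
    by (intro bexI[of _ "\<lambda>g. max (F g) (G g)"] max_in_family_space) auto
next
  fix F assume "F \<in> family_space"
  then show "family_norm F = 0 \<longleftrightarrow> F = (\<lambda>g. 0)" by (rule family_norm_eq_0_iff)
next
  fix r F assume "F \<in> family_space"
  then show "family_norm (\<lambda>g. r * F g) = \<bar>r\<bar> * family_norm F" by (rule family_norm_scale)
next
  fix F G assume "F \<in> family_space" "G \<in> family_space"
  then show "family_norm (\<lambda>g. F g + G g) \<le> family_norm F + family_norm G" by (rule family_norm_add)
next
  fix F G assume "F \<in> family_space" "G \<in> family_space"
    and "\<forall>g. bl_abs family_lattice F g \<le> bl_abs family_lattice G g"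
  then show "family_norm F \<le> family_norm G"
    by (intro family_norm_mono) (auto simp: bl_abs_family_lattice)
next
  fix s :: "nat \<Rightarrow> 'i \<Rightarrow> real"
  assume "(\<forall>n. s n \<in> family_space) \<and>
    (\<forall>e>0. \<exists>N. \<forall>m\<ge>N. \<forall>n\<ge>N. family_norm (\<lambda>g. s m g + - 1 * s n g) < e)"
  then show "\<exists>l\<in>family_space. \<forall>e>0. \<exists>N. \<forall>n\<ge>N. family_norm (\<lambda>g. s n g + - 1 * l g) < e"
    using family_space_complete[of s] by simp
qed (auto simp: algebra_simps mult_left_mono intro: order_trans)

end

section \<open>Finite sections of sequences and selection operators on \<open>\<ell>\<^sub>\<infinity>\<close>\<close>

instantiation "fun" :: (type, real_vector) real_vector
begin

definition scaleR_fun :: "real \<Rightarrow> ('a \<Rightarrow> 'b) \<Rightarrow> 'a \<Rightarrow> 'b" where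
  "scaleR_fun c f = (\<lambda>x. c *\<^sub>R f x)"

instance
  by standard (auto simp: scaleR_fun_def fun_eq_iff scaleR_add_right scaleR_add_left)

end

lemma scaleR_fun_apply [simp]: "(c *\<^sub>R f) x = c *\<^sub>R f x"
  by (simp add: scaleR_fun_def)

lemma sum_fun_apply: "(\<Sum>j\<in>A. f j) x = (\<Sum>j\<in>A. f j x)"
  by (induction A rule: infinite_finite_induct) auto

lemma apply_Bcontfun_nat:
  fixes g :: "nat \<Rightarrow> real"
  assumes "\<And>n. \<bar>g n\<bar> \<le> B"
  shows "apply_bcontfun (Bcontfun g) = g"
proof -
  have "g \<in> bcontfun" using assms by (intro bcontfun_normI) auto
  then show ?thesis by (simp add: Bcontfun_inverse)
qed

lemma unit_vec_apply: "apply_bcontfun (unit_vec j) n = (if n = j then 1 else 0)"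
  unfolding unit_vec_def by (subst apply_Bcontfun_nat[of _ 1]) auto

lemma norm_unit_vec: "norm (unit_vec j) = 1"
proof (rule antisym)
  show "norm (unit_vec j) \<le> 1" by (rule norm_bound) (simp add: unit_vec_apply)
  show "1 \<le> norm (unit_vec j)" using norm_bounded[of "unit_vec j" j] by (simp add: unit_vec_apply)
qed

definition trunc_seq :: "nat \<Rightarrow> (nat \<Rightarrow> 'x::real_vector) \<Rightarrow> nat \<Rightarrow> 'x" where
  "trunc_seq k z = (\<lambda>n. if n \<in> {1..k} then z n else 0)"

lemma sum_unit_vec_scaleR: "(\<lambda>n. \<Sum>j\<in>{1..k}. apply_bcontfun (unit_vec j) n *\<^sub>R z j) = trunc_seq k z"
proof
  fix n
  have "(\<Sum>j\<in>{1..k}. apply_bcontfun (unit_vec j) n *\<^sub>R z j) = (\<Sum>j\<in>{1..k}. if j = n then z n else 0)"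
    by (rule sum.cong) (auto simp: unit_vec_apply)
  then show "(\<Sum>j\<in>{1..k}. apply_bcontfun (unit_vec j) n *\<^sub>R z j) = trunc_seq k z n"
    by (simp add: trunc_seq_def)
qed

lemma trunc_seq_eq_tensor_of: "trunc_seq k z = tensor_of (Suc k) unit_vec (trunc_seq k z)"
proof
  fix n
  have "tensor_of (Suc k) unit_vec (trunc_seq k z) n = (\<Sum>i<Suc k. if i = n then trunc_seq k z n else 0)"
    unfolding tensor_of_def by (rule sum.cong) (auto simp: unit_vec_apply)
  then show "trunc_seq k z n = tensor_of (Suc k) unit_vec (trunc_seq k z) n"
    by (simp add: trunc_seq_def)
qed

lemma trunc_seq_in_linf_tensor: "trunc_seq k z \<in> linf_tensor"
  unfolding linf_tensor_def using trunc_seq_eq_tensor_of by blast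

lemma trunc_seq_add: "(\<lambda>n. trunc_seq k z n + trunc_seq k z' n) = trunc_seq k (\<lambda>n. z n + z' n)"
  by (auto simp: trunc_seq_def)

lemma trunc_seq_scale: "(\<lambda>n. c *\<^sub>R trunc_seq k z n) = trunc_seq k (\<lambda>n. c *\<^sub>R z n)"
  by (auto simp: trunc_seq_def)

lemma trunc_seq_idem [simp]: "trunc_seq k (trunc_seq k z) = trunc_seq k z"
  by (auto simp: trunc_seq_def)

definition coordinate_functional :: "((nat \<Rightarrow> 'x::real_vector) \<Rightarrow> real) \<Rightarrow> nat \<Rightarrow> 'x \<Rightarrow> real" where
  "coordinate_functional W j x = W (\<lambda>n. if n = j then x else 0)"

lemma linear_coordinate_functional:
  assumes "linear W"
  shows "linear (coordinate_functional W j)"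
proof (rule linearI)
  show "coordinate_functional W j (x + y) = coordinate_functional W j x + coordinate_functional W j y" for x y
  proof -
    have "(\<lambda>n. if n = j then x + y else 0) = (\<lambda>n. if n = j then x else 0) + (\<lambda>n. if n = j then y else 0)"
      by auto
    then show ?thesis unfolding coordinate_functional_def by (simp add: linear_add[OF assms])
  qed
  show "coordinate_functional W j (r *\<^sub>R x) = r *\<^sub>R coordinate_functional W j x" for r x
  proof -
    have "(\<lambda>n. if n = j then r *\<^sub>R x else 0) = r *\<^sub>R (\<lambda>n. if n = j then x else 0)"
      by auto
    then show ?thesis unfolding coordinate_functional_def by (simp add: linear_scale[OF assms])
  qed
qed

lemma linear_trunc_seq_eq_sum:
  assumes "linear W"
  shows "W (trunc_seq k u) = (\<Sum>j\<in>{1..k}. coordinate_functional W j (u j))"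
proof -
  have "trunc_seq k u = (\<Sum>j\<in>{1..k}. (\<lambda>n. if n = j then u j else 0))"
    by (rule ext) (simp add: sum_fun_apply trunc_seq_def sum.delta')
  then show ?thesis unfolding coordinate_functional_def by (simp add: linear_sum[OF assms])
qed

definition signed_selection :: "nat \<Rightarrow> (nat \<Rightarrow> real) \<Rightarrow> (nat \<Rightarrow> nat) \<Rightarrow> linf \<Rightarrow> linf" where
  "signed_selection k \<epsilon> \<sigma> a = Bcontfun (\<lambda>n. if n \<in> {1..k} then \<epsilon> n * apply_bcontfun a (\<sigma> n) else 0)"

context
  fixes \<epsilon> :: "nat \<Rightarrow> real"
  assumes signs: "\<And>n. \<bar>\<epsilon> n\<bar> \<le> 1"
begin

lemma signed_selection_bound:
  "\<bar>if n \<in> {1..k} then \<epsilon> n * apply_bcontfun a (\<sigma> n) else 0\<bar> \<le> norm a"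
proof -
  have "\<bar>\<epsilon> n * apply_bcontfun a (\<sigma> n)\<bar> \<le> 1 * norm a"
    unfolding abs_mult using norm_bounded[of a "\<sigma> n"] signs[of n] by (intro mult_mono) auto
  then show ?thesis by auto
qed

lemma apply_signed_selection:
  "apply_bcontfun (signed_selection k \<epsilon> \<sigma> a) n = (if n \<in> {1..k} then \<epsilon> n * apply_bcontfun a (\<sigma> n) else 0)"
  unfolding signed_selection_def by (subst apply_Bcontfun_nat[OF signed_selection_bound]) (rule refl)

lemma norm_signed_selection_le: "norm (signed_selection k \<epsilon> \<sigma> a) \<le> norm a"
  by (rule norm_bound) (simp only: real_norm_def apply_signed_selection signed_selection_bound)

lemma bounded_linear_signed_selection: "bounded_linear (signed_selection k \<epsilon> \<sigma>)"
proof (rule bounded_linear_intro[of _ 1])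
  show "signed_selection k \<epsilon> \<sigma> (a + b) = signed_selection k \<epsilon> \<sigma> a + signed_selection k \<epsilon> \<sigma> b" for a b
    by (rule bcontfun_eqI) (simp add: apply_signed_selection algebra_simps)
  show "signed_selection k \<epsilon> \<sigma> (r *\<^sub>R a) = r *\<^sub>R signed_selection k \<epsilon> \<sigma> a" for r a
    by (rule bcontfun_eqI) (simp add: apply_signed_selection algebra_simps)
  show "norm (signed_selection k \<epsilon> \<sigma> a) \<le> norm a * 1" for a
    using norm_signed_selection_le by simp
qed

lemma onorm_signed_selection_le: "onorm (signed_selection k \<epsilon> \<sigma>) \<le> 1"
  using norm_signed_selection_le by (intro onorm_bound) simp_all

lemma tensor_of_signed_selection:
  assumes "\<And>j. j \<in> {1..k} \<Longrightarrow> \<sigma> j \<in> {1..m}"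
  shows "tensor_of (Suc m) (\<lambda>i. signed_selection k \<epsilon> \<sigma> (unit_vec i)) (trunc_seq m z)
    = trunc_seq k (\<lambda>j. \<epsilon> j *\<^sub>R z (\<sigma> j))"
proof
  fix n
  have "tensor_of (Suc m) (\<lambda>i. signed_selection k \<epsilon> \<sigma> (unit_vec i)) (trunc_seq m z) n
      = (\<Sum>i<Suc m. if n \<in> {1..k} \<and> i = \<sigma> n then \<epsilon> n *\<^sub>R z (\<sigma> n) else 0)"
    unfolding tensor_of_def
    by (rule sum.cong) (use assms in \<open>auto simp: apply_signed_selection unit_vec_apply trunc_seq_def\<close>)
  also have "\<dots> = trunc_seq k (\<lambda>j. \<epsilon> j *\<^sub>R z (\<sigma> j)) n"
    using assms[of n] by (auto simp: trunc_seq_def sum.delta')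
  finally show "tensor_of (Suc m) (\<lambda>i. signed_selection k \<epsilon> \<sigma> (unit_vec i)) (trunc_seq m z) n
      = trunc_seq k (\<lambda>j. \<epsilon> j *\<^sub>R z (\<sigma> j)) n" .
qed

end

definition max_abs :: "('x \<Rightarrow> real) \<Rightarrow> nat \<Rightarrow> (nat \<Rightarrow> 'x) \<Rightarrow> real" where
  "max_abs l m z = Max (insert 0 ((\<lambda>i. \<bar>l (z i)\<bar>) ` {1..m}))"

lemma max_abs_nonneg: "0 \<le> max_abs l m z"
  unfolding max_abs_def by (rule Max_ge) auto

lemma abs_le_max_abs: "i \<in> {1..m} \<Longrightarrow> \<bar>l (z i)\<bar> \<le> max_abs l m z"
  unfolding max_abs_def by (rule Max_ge) auto

lemma max_abs_attained:
  assumes "1 \<le> m"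
  shows "\<exists>i\<in>{1..m}. max_abs l m z = \<bar>l (z i)\<bar>"
proof -
  have "max_abs l m z \<in> insert 0 ((\<lambda>i. \<bar>l (z i)\<bar>) ` {1..m})"
    unfolding max_abs_def by (rule Max_in) auto
  moreover have "\<bar>l (z 1)\<bar> \<le> max_abs l m z" using abs_le_max_abs[of 1 m] assms by simp
  ultimately show ?thesis using assms by force
qed

section \<open>The Banach lattice attached to a left tensorial norm\<close>

locale left_tensorial_norm =
  fixes \<alpha> :: "(nat \<Rightarrow> 'x::banach) \<Rightarrow> real"
  assumes left_tensorial: "left_tensorial \<alpha>"
begin

lemma crossnorm_alpha: "crossnorm \<alpha>"
  using left_tensorial unfolding left_tensorial_def by simp

lemma alpha_trunc_seq_add: "\<alpha> (trunc_seq k (\<lambda>n. z n + z' n)) \<le> \<alpha> (trunc_seq k z) + \<alpha> (trunc_seq k z')"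
  using crossnorm_alpha trunc_seq_in_linf_tensor
  unfolding crossnorm_def is_norm_on_def trunc_seq_add[symmetric] by blast

lemma alpha_trunc_seq_scale: "\<alpha> (trunc_seq k (\<lambda>n. c *\<^sub>R z n)) = \<bar>c\<bar> * \<alpha> (trunc_seq k z)"
  using crossnorm_alpha trunc_seq_in_linf_tensor
  unfolding crossnorm_def is_norm_on_def trunc_seq_scale[symmetric] by blast

lemma alpha_trunc_seq_nonneg: "0 \<le> \<alpha> (trunc_seq k z)"
proof -
  have "\<alpha> (trunc_seq k (\<lambda>n. z n + (-1) *\<^sub>R z n)) \<le> \<alpha> (trunc_seq k z) + \<alpha> (trunc_seq k (\<lambda>n. (-1) *\<^sub>R z n))"
    by (rule alpha_trunc_seq_add)
  moreover have "\<alpha> (trunc_seq k (\<lambda>n. z n + (-1) *\<^sub>R z n)) = 0"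
    using alpha_trunc_seq_scale[of k 0 z] by simp
  ultimately show ?thesis using alpha_trunc_seq_scale[of k "-1" z] by simp
qed

lemma alpha_trunc_seq_one: "\<alpha> (trunc_seq 1 (\<lambda>_. x)) = norm x"
proof -
  have "trunc_seq 1 (\<lambda>_. x) = elem_tensor (unit_vec 1) x"
    by (auto simp: trunc_seq_def elem_tensor_def unit_vec_apply)
  then show ?thesis using crossnorm_alpha norm_unit_vec unfolding crossnorm_def by simp
qed

lemma sublinear_alpha_trunc_seq: "sublinear (\<lambda>z. \<alpha> (trunc_seq k z))"
  unfolding sublinear_def plus_fun_def scaleR_fun_def
  using alpha_trunc_seq_add alpha_trunc_seq_scale by simp

lemma alpha_signed_selection_le:
  assumes signs: "\<And>n. \<bar>\<epsilon> n\<bar> \<le> 1" and \<sigma>: "\<And>j. j \<in> {1..k} \<Longrightarrow> \<sigma> j \<in> {1..m}"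
  shows "\<alpha> (trunc_seq k (\<lambda>j. \<epsilon> j *\<^sub>R z (\<sigma> j))) \<le> \<alpha> (trunc_seq m z)"
proof -
  let ?T = "signed_selection k \<epsilon> \<sigma>"
  have "\<alpha> (trunc_seq k (\<lambda>j. \<epsilon> j *\<^sub>R z (\<sigma> j))) = \<alpha> (tensor_of (Suc m) (\<lambda>i. ?T (unit_vec i)) (trunc_seq m z))"
    using tensor_of_signed_selection[of \<epsilon> k \<sigma> m z, OF signs \<sigma>] by simp
  also have "\<dots> \<le> onorm ?T * \<alpha> (tensor_of (Suc m) unit_vec (trunc_seq m z))"
    using left_tensorial bounded_linear_signed_selection[of \<epsilon>, OF signs] unfolding left_tensorial_def by blast
  also have "\<dots> \<le> 1 * \<alpha> (trunc_seq m z)"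
    unfolding trunc_seq_eq_tensor_of[symmetric]
    by (intro mult_right_mono onorm_signed_selection_le[of \<epsilon>, OF signs] alpha_trunc_seq_nonneg)
  finally show ?thesis by simp
qed

definition alpha_families :: "('x \<Rightarrow> real) weighted_family set" where
  "alpha_families = {(n, c, l). (\<forall>i<n. 0 \<le> c i \<and> linear (l i)) \<and>
     (\<forall>m z. (\<Sum>i<n. c i * max_abs (l i) m z) \<le> \<alpha> (trunc_seq m z))}"

lemma alpha_familiesD:
  assumes "(n, c, l) \<in> alpha_families"
  shows "i < n \<Longrightarrow> 0 \<le> c i" and "i < n \<Longrightarrow> linear (l i)"
    and "(\<Sum>i<n. c i * max_abs (l i) m z) \<le> \<alpha> (trunc_seq m z)"
  using assms unfolding alpha_families_def by auto

sublocale weighted_families alpha_families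
proof
  have "(0, \<lambda>_. 0, \<lambda>_ _. 0) \<in> alpha_families"
    unfolding alpha_families_def using alpha_trunc_seq_nonneg by simp
  then show "alpha_families \<noteq> {}" by blast
qed (rule alpha_familiesD)

lemma linear_atom: "g \<in> atoms \<Longrightarrow> linear g"
  unfolding atoms_def using alpha_familiesD(2)[of 1 "\<lambda>_. 1" "\<lambda>_. g" 0] by simp

lemma atom_of_unit_family:
  assumes a: "(k, \<lambda>_. 1, l) \<in> alpha_families" and i: "i < k"
  shows "l i \<in> atoms"
proof -
  have "max_abs (l i) m z \<le> \<alpha> (trunc_seq m z)" for m z
  proof -
    have "max_abs (l i) m z \<le> (\<Sum>i<k. max_abs (l i) m z)"
      using i by (intro member_le_sum) (auto simp: max_abs_nonneg)
    also have "\<dots> \<le> \<alpha> (trunc_seq m z)" using alpha_familiesD(3)[OF a] by simp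
    finally show ?thesis .
  qed
  then have "(1, \<lambda>_. 1, \<lambda>_. l i) \<in> alpha_families"
    unfolding alpha_families_def using alpha_familiesD(2)[OF a i] by simp
  then show ?thesis unfolding atoms_def by simp
qed

lemma family_sum_le_alpha:
  assumes a: "a \<in> alpha_families" and F: "\<And>g. \<bar>F g\<bar> \<le> max_abs g k y"
  shows "family_sum F a \<le> \<alpha> (trunc_seq k y)"
proof -
  obtain n c l where a_eq: "a = (n, c, l)" by (cases a)
  have "c i * \<bar>F (l i)\<bar> \<le> c i * max_abs (l i) k y" if "i < n" for i
    using alpha_familiesD(1)[of n c l i] a a_eq that F by (simp add: mult_left_mono)
  then have "family_sum F a \<le> (\<Sum>i<n. c i * max_abs (l i) k y)"
    unfolding a_eq family_sum_def prod.case by (rule sum_mono) simp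
  also have "\<dots> \<le> \<alpha> (trunc_seq k y)" using alpha_familiesD(3) a a_eq by simp
  finally show ?thesis .
qed

end

context left_tensorial_norm
begin

definition evaluation :: "'x \<Rightarrow> ('x \<Rightarrow> real) \<Rightarrow> real" where
  "evaluation x g = (if g \<in> atoms then g x else 0)"

lemma evaluation_add: "evaluation (x + y) = (\<lambda>g. evaluation x g + evaluation y g)"
  by (auto simp: evaluation_def linear_add[OF linear_atom])

lemma evaluation_scale: "evaluation (c *\<^sub>R x) = (\<lambda>g. c * evaluation x g)"
  by (auto simp: evaluation_def linear_scale[OF linear_atom])

lemma abs_evaluation_le_max_abs: "j \<in> {1..k} \<Longrightarrow> \<bar>evaluation (y j) g\<bar> \<le> max_abs g k y"
  unfolding evaluation_def using abs_le_max_abs[of j k g y] max_abs_nonneg[of g k y] by auto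

lemma evaluation_in_family_space: "evaluation x \<in> family_space"
proof (rule family_spaceI)
  show "evaluation x g = 0" if "g \<notin> atoms" for g
    using that by (simp add: evaluation_def)
  show "family_sum (evaluation x) a \<le> \<alpha> (trunc_seq 1 (\<lambda>_. x))" if "a \<in> alpha_families" for a
    using that abs_evaluation_le_max_abs[of 1 1 "\<lambda>_. x"] by (intro family_sum_le_alpha) auto
qed

lemma Max_abs_evaluation_in_family_space:
  assumes "1 \<le> k"
  shows "(\<lambda>g. Max ((\<lambda>j. \<bar>evaluation (y j) g\<bar>) ` {1..k})) \<in> family_space"
    and "family_norm (\<lambda>g. Max ((\<lambda>j. \<bar>evaluation (y j) g\<bar>) ` {1..k})) \<le> \<alpha> (trunc_seq k y)"
proof -
  let ?G = "\<lambda>g. Max ((\<lambda>j. \<bar>evaluation (y j) g\<bar>) ` {1..k})"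
  have "0 \<le> ?G g" and "?G g \<le> max_abs g k y" for g
    using assms abs_evaluation_le_max_abs by (auto simp: Max_ge_iff Max_le_iff)
  then have bound: "family_sum ?G a \<le> \<alpha> (trunc_seq k y)" if "a \<in> alpha_families" for a
    using that by (intro family_sum_le_alpha) auto
  show "?G \<in> family_space"
  proof (rule family_spaceI[OF _ bound])
    show "?G g = 0" if "g \<notin> atoms" for g
      using that assms by (simp add: evaluation_def)
  qed
  show "family_norm ?G \<le> \<alpha> (trunc_seq k y)" by (rule family_norm_le[OF bound])
qed

lemma sum_max_abs_coordinate_functional_le:
  assumes W: "linear W" and dominated: "\<And>z. W z \<le> \<alpha> (trunc_seq k z)"
  shows "(\<Sum>j\<in>{1..k}. max_abs (coordinate_functional W j) m z) \<le> \<alpha> (trunc_seq m z)"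
proof (cases "m = 0")
  case True
  then show ?thesis using alpha_trunc_seq_nonneg by (simp add: max_abs_def)
next
  case False
  let ?w = "coordinate_functional W"
  have "1 \<le> m" using False by simp
  then have "\<forall>j. \<exists>i. i \<in> {1..m} \<and> max_abs (?w j) m z = \<bar>?w j (z i)\<bar>"
    using max_abs_attained by blast
  from choice[OF this] obtain \<sigma>
    where "\<forall>j. \<sigma> j \<in> {1..m} \<and> max_abs (?w j) m z = \<bar>?w j (z (\<sigma> j))\<bar>"
    by blast
  then have \<sigma>: "\<And>j. \<sigma> j \<in> {1..m}" and attained: "\<And>j. max_abs (?w j) m z = \<bar>?w j (z (\<sigma> j))\<bar>"
    by blast+
  define \<epsilon> where "\<epsilon> j = sgn (?w j (z (\<sigma> j)))" for j
  have signs: "\<bar>\<epsilon> j\<bar> \<le> 1" for j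
    unfolding \<epsilon>_def by (simp add: sgn_real_def)
  have "max_abs (?w j) m z = ?w j (\<epsilon> j *\<^sub>R z (\<sigma> j))" for j
    unfolding attained \<epsilon>_def linear_scale[OF linear_coordinate_functional[OF W]]
    by (simp add: abs_sgn)
  then have "(\<Sum>j\<in>{1..k}. max_abs (?w j) m z) = W (trunc_seq k (\<lambda>j. \<epsilon> j *\<^sub>R z (\<sigma> j)))"
    by (simp add: linear_trunc_seq_eq_sum[OF W])
  also have "\<dots> \<le> \<alpha> (trunc_seq k (\<lambda>j. \<epsilon> j *\<^sub>R z (\<sigma> j)))"
    using dominated[of "trunc_seq k (\<lambda>j. \<epsilon> j *\<^sub>R z (\<sigma> j))"] by simp
  also have "\<dots> \<le> \<alpha> (trunc_seq m z)"
    by (rule alpha_signed_selection_le[of \<epsilon>, OF signs \<sigma>])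
  finally show ?thesis .
qed

lemma coordinate_family_in_alpha_families:
  assumes W: "linear W" and dominated: "\<And>z. W z \<le> \<alpha> (trunc_seq k z)"
  shows "(k, \<lambda>_. 1, \<lambda>i. coordinate_functional W (Suc i)) \<in> alpha_families"
  unfolding alpha_families_def
  using linear_coordinate_functional[OF W] sum_max_abs_coordinate_functional_le[OF W dominated]
  by (simp add: sum.atLeast1_atMost_eq)

lemma norming_family:
  obtains W where "(k, \<lambda>_. 1, \<lambda>i. coordinate_functional W (Suc i)) \<in> alpha_families"
    and "\<alpha> (trunc_seq k y) = (\<Sum>j\<in>{1..k}. coordinate_functional W j (y j))"
proof -
  obtain W where W: "linear W" and dominated: "\<And>z. W z \<le> \<alpha> (trunc_seq k z)"
    and norming: "W (trunc_seq k y) = \<alpha> (trunc_seq k (trunc_seq k y))"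
    using hahn_banach_sublinear[OF sublinear_alpha_trunc_seq[of k], of "trunc_seq k y"] by blast
  show ?thesis
  proof (rule that)
    show "(k, \<lambda>_. 1, \<lambda>i. coordinate_functional W (Suc i)) \<in> alpha_families"
      by (rule coordinate_family_in_alpha_families[OF W dominated])
    show "\<alpha> (trunc_seq k y) = (\<Sum>j\<in>{1..k}. coordinate_functional W j (y j))"
      using norming linear_trunc_seq_eq_sum[OF W] by simp
  qed
qed

lemma family_norm_Max_abs_evaluation:
  assumes k: "1 \<le> k"
  shows "family_norm (\<lambda>g. Max ((\<lambda>j. \<bar>evaluation (y j) g\<bar>) ` {1..k})) = \<alpha> (trunc_seq k y)"
proof (rule antisym)
  let ?G = "\<lambda>g. Max ((\<lambda>j. \<bar>evaluation (y j) g\<bar>) ` {1..k})"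
  show "family_norm ?G \<le> \<alpha> (trunc_seq k y)"
    by (rule Max_abs_evaluation_in_family_space(2)[OF k])
  obtain W where family: "(k, \<lambda>_. 1, \<lambda>i. coordinate_functional W (Suc i)) \<in> alpha_families"
    and norming: "\<alpha> (trunc_seq k y) = (\<Sum>j\<in>{1..k}. coordinate_functional W j (y j))"
    using norming_family .
  let ?w = "coordinate_functional W"
  have w_atom: "?w j \<in> atoms" if "j \<in> {1..k}" for j
  proof -
    have "j - 1 < k" using that by auto
    then show ?thesis using atom_of_unit_family[OF family] that by fastforce
  qed
  have "?w j (y j) \<le> \<bar>?G (?w j)\<bar>" if j: "j \<in> {1..k}" for j
  proof -
    have "?w j (y j) \<le> \<bar>evaluation (y j) (?w j)\<bar>"
      using w_atom[OF j] by (simp add: evaluation_def)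
    also have "\<dots> \<le> ?G (?w j)" using j by (intro Max_ge) auto
    finally show ?thesis by simp
  qed
  then have "\<alpha> (trunc_seq k y) \<le> (\<Sum>j\<in>{1..k}. \<bar>?G (?w j)\<bar>)"
    unfolding norming by (rule sum_mono)
  also have "\<dots> = family_sum ?G (k, \<lambda>_. 1, \<lambda>i. ?w (Suc i))"
    by (simp add: family_sum_def sum.atLeast1_atMost_eq)
  also have "\<dots> \<le> family_norm ?G"
    by (rule family_sum_le_norm[OF Max_abs_evaluation_in_family_space(1)[OF k] family])
  finally show "\<alpha> (trunc_seq k y) \<le> family_norm ?G" .
qed

end

theorem theorem1p7:
  fixes \<alpha> :: "(nat \<Rightarrow> 'x::banach) \<Rightarrow> real"
  assumes "left_tensorial \<alpha>"
  shows "\<exists>(L :: (('x \<Rightarrow> real) \<Rightarrow> real) blat) (J :: 'x \<Rightarrow> (('x \<Rightarrow> real) \<Rightarrow> real)).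
           banach_lattice L \<and> linear_isometry_into L J \<and>
           (\<forall>k\<ge>1. \<forall>y :: nat \<Rightarrow> 'x.
              bl_norm L (bl_Sup L (\<lambda>j. bl_abs L (J (y j))) k) =
              \<alpha> (\<lambda>n. \<Sum>j\<in>{1..k}. apply_bcontfun (unit_vec j) n *\<^sub>R y j))"
proof -
  interpret left_tensorial_norm \<alpha> by unfold_locales (rule assms)
  have abs_evaluation: "bl_abs family_lattice (evaluation x) = (\<lambda>g. \<bar>evaluation x g\<bar>)" for x
    by (rule bl_abs_family_lattice[OF evaluation_in_family_space])
  have lattice_norm: "family_norm (bl_Sup family_lattice (\<lambda>j. bl_abs family_lattice (evaluation (y j))) k)
      = \<alpha> (trunc_seq k y)" if "1 \<le> k" for k y
    using bl_Sup_family_lattice[OF _ that] abs_in_family_space[OF evaluation_in_family_space]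
      family_norm_Max_abs_evaluation[OF that] by (simp add: abs_evaluation)
  have "family_norm (evaluation x) = norm x" for x
    using lattice_norm[of 1 "\<lambda>_. x"] alpha_trunc_seq_one[of x]
    by (simp add: abs_evaluation family_norm_abs)
  then have "linear_isometry_into family_lattice evaluation"
    unfolding linear_isometry_into_def
    using evaluation_in_family_space evaluation_add evaluation_scale by simp
  then show ?thesis
    unfolding sum_unit_vec_scaleR
    using banach_lattice_family_lattice lattice_norm by fastforce
qed

end
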